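(* Let $\mathcal{S}$ be the set of real numbers $c$ for which there exists a hereditary property of ordered graphs $\mathcal{P}$ with $\lim_{n \to \infty} |\mathcal{P}_n|^{1/n} = c$. Then for every integer $n \geqslant 2$ we have $n \in A^{n-1}(\mathcal{S})$, i.e. $n$ is a degree $n-1$ accumulation point from below of $\mathcal{S}$.
   Context: A hereditary property of ordered graphs is a collection of ordered graphs (graphs on $[n]$ with the natural order) closed under order-preserving isomorphism and under taking induced ordered subgraphs; $\mathcal{P}_n$ denotes its members with vertex set $[n]$. For $S\subset\mathbb{R}$, a point $c\in\mathbb{R}$ is an accumulation point from below of $S$ if for every $\varepsilon>0$, $S\cap(c-\varepsilon,c)\neq\emptyset$. $A^1(S)$ denotes the set of accumulation points from below of $S$, and $A^{m+1}(S)=A^1(A^m(S))$ for $m\in\mathbb{N}$. *)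

theory Defs
  imports Complex_Main
begin

text \<open>An ordered graph on [n] = {1..n} (natural order) is a pair (n, E) where E is a
set of 2-element subsets of {1..n}.\<close>

type_synonym ograph = "nat \<times> nat set set"

definition is_ograph :: "ograph \<Rightarrow> bool" where
  "is_ograph G \<longleftrightarrow>
     snd G \<subseteq> {e. \<exists>i j. i \<in> {1..fst G} \<and> j \<in> {1..fst G} \<and> i \<noteq> j \<and> e = {i, j}}"

text \<open>Induced ordered subgraph on a vertex set S, relabelled to [card S] by the unique
order-preserving bijection {1..card S} -> S.\<close>

definition induced_osub :: "ograph \<Rightarrow> nat set \<Rightarrow> ograph" where
  "induced_osub G S =
     (let f = (\<lambda>i. sorted_list_of_set S ! (i - 1)) in
      (card S, {e. \<exists>i j. i \<in> {1..card S} \<and> j \<in> {1..card S} \<and> i \<noteq> j \<and>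
                       e = {i, j} \<and> {f i, f j} \<in> snd G}))"

text \<open>Hereditary property: a collection of ordered graphs closed under taking induced
ordered subgraphs (closure under order-preserving isomorphism is automatic, since
graphs are normalised to vertex set [n] with the natural order).\<close>

definition hereditary :: "ograph set \<Rightarrow> bool" where
  "hereditary P \<longleftrightarrow>
     (\<forall>G\<in>P. is_ograph G) \<and>
     (\<forall>G\<in>P. \<forall>S. S \<subseteq> {1..fst G} \<longrightarrow> induced_osub G S \<in> P)"

definition level :: "ograph set \<Rightarrow> nat \<Rightarrow> nat set set set" where
  "level P n = {E. (n, E) \<in> P}"

definition growth_constants :: "real set" where
  "growth_constants = {c. \<exists>P. hereditary P \<and>
      (\<lambda>n. real (card (level P n)) powr (1 / real n)) \<longlonglongrightarrow> c}"

definition acc_below :: "real set \<Rightarrow> real set" where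
  "acc_below S = {c. \<forall>\<epsilon>>0. S \<inter> {c - \<epsilon><..<c} \<noteq> {}}"

end

theory Submission
  imports Defs
begin

text \<open>
  Encode an ordered graph on \<open>[m]\<close> in which every vertex \<open>t\<close> is adjacent to exactly the \<open>r!t\<close>
  vertices immediately preceding it by its sequence \<open>r\<close> of back-degrees, with \<open>r!t \<le> min t q\<close>.
  A position no edge passes over is a cut; cuts split every sequence uniquely into blocks.
  For \<open>K :: nat \<Rightarrow> nat\<close>, bounding by \<open>K d\<close> the number of entries \<open>\<ge> d\<close> (for \<open>j \<le> d \<le> q\<close>)
  in every cut-free stretch gives a hereditary property whose counts satisfy the renewal
  equation \<open>a m = (\<Sum>l=1..m. b l * a (m - l))\<close> over the block counts \<open>b\<close>; its growth rate
  is therefore the root \<open>x\<close> of \<open>\<Sum>l. b l / x ^ l = 1\<close>.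

  For \<open>j = q + 1\<close> nothing is restricted and the root is \<open>q + 1\<close>. Passing from \<open>j + 1\<close> to \<open>j\<close>
  with the new bound \<open>K j = k\<close> removes blocks, so the root drops strictly, but as \<open>k \<rightarrow> \<infinity>\<close> all
  blocks of a given length return and the roots converge to the old one from below. Induction
  down to \<open>j = 1\<close>, where blocks have bounded length and the root really is a growth constant,
  makes \<open>q + 1\<close> an accumulation point of order \<open>q\<close>.
\<close>

section \<open>Back-degree sequences, cuts and blocks\<close>

definition valid_seq :: "nat \<Rightarrow> nat list \<Rightarrow> bool" where
  "valid_seq q r \<longleftrightarrow> (\<forall>t<length r. r!t \<le> t \<and> r!t \<le> q)"

definition is_cut :: "nat list \<Rightarrow> nat \<Rightarrow> bool" where
  "is_cut r c \<longleftrightarrow> (\<forall>t. c \<le> t \<longrightarrow> t < length r \<longrightarrow> r!t + c \<le> t)"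

definition cut_free :: "nat list \<Rightarrow> nat \<Rightarrow> nat \<Rightarrow> bool" where
  "cut_free r a b \<longleftrightarrow> (\<forall>c. a < c \<longrightarrow> c < b \<longrightarrow> \<not> is_cut r c)"

definition is_block :: "nat list \<Rightarrow> bool" where
  "is_block r \<longleftrightarrow> r \<noteq> [] \<and> cut_free r 0 (length r)"

definition count_ge :: "nat list \<Rightarrow> nat \<Rightarrow> nat \<Rightarrow> nat \<Rightarrow> nat" where
  "count_ge r d a b = card {t. a \<le> t \<and> t < b \<and> d \<le> r!t}"

definition admissible :: "nat \<Rightarrow> nat \<Rightarrow> (nat \<Rightarrow> nat) \<Rightarrow> nat list \<Rightarrow> bool" where
  "admissible q j K r \<longleftrightarrow> (\<forall>a b d. a < b \<longrightarrow> b \<le> length r \<longrightarrow> cut_free r a b \<longrightarrow>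
      j \<le> d \<longrightarrow> d \<le> q \<longrightarrow> count_ge r d a b \<le> K d)"

definition adm_seqs :: "nat \<Rightarrow> nat \<Rightarrow> (nat \<Rightarrow> nat) \<Rightarrow> nat \<Rightarrow> nat list set" where
  "adm_seqs q j K m = {r. length r = m \<and> valid_seq q r \<and> admissible q j K r}"

definition adm_blocks :: "nat \<Rightarrow> nat \<Rightarrow> (nat \<Rightarrow> nat) \<Rightarrow> nat \<Rightarrow> nat list set" where
  "adm_blocks q j K l = {r \<in> adm_seqs q j K l. is_block r}"

lemma valid_seq_append:
  assumes "valid_seq q B" "valid_seq q r"
  shows "valid_seq q (B @ r)"
  unfolding valid_seq_def
proof (intro allI impI)
  fix t assume t: "t < length (B @ r)"
  show "(B @ r)!t \<le> t \<and> (B @ r)!t \<le> q"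
  proof (cases "t < length B")
    case False
    then have "r!(t - length B) \<le> t - length B \<and> r!(t - length B) \<le> q"
      using assms(2) t unfolding valid_seq_def by auto
    then show ?thesis using False by (auto simp: nth_append)
  qed (use assms(1) valid_seq_def in \<open>auto simp: nth_append\<close>)
qed

lemma valid_seq_take: "valid_seq q r \<Longrightarrow> valid_seq q (take c r)"
  unfolding valid_seq_def by auto

lemma valid_seq_drop:
  assumes "valid_seq q r" "is_cut r c"
  shows "valid_seq q (drop c r)"
  unfolding valid_seq_def
proof (intro allI impI)
  fix t assume t: "t < length (drop c r)"
  then have "r!(c+t) + c \<le> c + t" "r!(c+t) \<le> q" using assms unfolding is_cut_def valid_seq_def by auto
  then show "drop c r ! t \<le> t \<and> drop c r ! t \<le> q" using t by auto
qed

lemma is_cut_length: "is_cut r (length r)"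
  unfolding is_cut_def by auto

lemma is_cut_append_length:
  assumes "valid_seq q r"
  shows "is_cut (B @ r) (length B)"
  unfolding is_cut_def
proof (intro allI impI)
  fix t assume t: "length B \<le> t" "t < length (B @ r)"
  then have "r!(t - length B) \<le> t - length B" using assms unfolding valid_seq_def by auto
  then show "(B @ r)!t + length B \<le> t" using t by (auto simp: nth_append)
qed

lemma is_cut_append_left:
  assumes "valid_seq q r" "c \<le> length B"
  shows "is_cut (B @ r) c \<longleftrightarrow> is_cut B c"
proof
  assume "is_cut (B @ r) c"
  then show "is_cut B c" unfolding is_cut_def by (auto simp: nth_append dest: spec)
next
  assume h: "is_cut B c"
  show "is_cut (B @ r) c" unfolding is_cut_def
  proof (intro allI impI)
    fix t assume t: "c \<le> t" "t < length (B @ r)"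
    show "(B @ r)!t + c \<le> t"
    proof (cases "t < length B")
      case True then show ?thesis using h t unfolding is_cut_def by (auto simp: nth_append)
    next
      case False
      then have "r!(t - length B) \<le> t - length B" using assms(1) t unfolding valid_seq_def by auto
      then show ?thesis using False assms(2) by (auto simp: nth_append)
    qed
  qed
qed

lemma is_cut_append_right: "is_cut (B @ r) (length B + c) \<longleftrightarrow> is_cut r c"
proof
  assume h: "is_cut (B @ r) (length B + c)"
  show "is_cut r c" unfolding is_cut_def
  proof (intro allI impI)
    fix t assume "c \<le> t" "t < length r"
    with h[unfolded is_cut_def, rule_format, of "length B + t"] show "r!t + c \<le> t"
      by (auto simp: nth_append)
  qed
next
  assume h: "is_cut r c"
  show "is_cut (B @ r) (length B + c)" unfolding is_cut_def
  proof (intro allI impI)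
    fix t assume t: "length B + c \<le> t" "t < length (B @ r)"
    with h[unfolded is_cut_def, rule_format, of "t - length B"]
    have "r!(t - length B) + c \<le> t - length B" by auto
    then show "(B @ r)!t + (length B + c) \<le> t" using t by (auto simp: nth_append)
  qed
qed

lemma cut_free_append_left:
  assumes "valid_seq q r" "b \<le> length B"
  shows "cut_free (B @ r) a b \<longleftrightarrow> cut_free B a b"
  using is_cut_append_left[OF assms(1)] assms(2) unfolding cut_free_def by auto

lemma cut_free_append_right:
  "cut_free (B @ r) (length B + a) (length B + b) \<longleftrightarrow> cut_free r a b"
  unfolding cut_free_def
proof (intro iffI allI impI)
  fix c assume "\<forall>c. length B + a < c \<longrightarrow> c < length B + b \<longrightarrow> \<not> is_cut (B @ r) c" "a < c" "c < b"
  then show "\<not> is_cut r c" using is_cut_append_right[of B r c] by auto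
next
  fix c assume "\<forall>c. a < c \<longrightarrow> c < b \<longrightarrow> \<not> is_cut r c" "length B + a < c" "c < length B + b"
  then show "\<not> is_cut (B @ r) c" using is_cut_append_right[of B r "c - length B"] by auto
qed

lemma count_ge_append_left:
  assumes "b \<le> length B"
  shows "count_ge (B @ r) d a b = count_ge B d a b"
  unfolding count_ge_def using assms
  by (intro arg_cong[where f=card]) (auto simp: nth_append)

lemma count_ge_append_right:
  "count_ge (B @ r) d (length B + a) (length B + b) = count_ge r d a b"
proof -
  have "{t. length B + a \<le> t \<and> t < length B + b \<and> d \<le> (B @ r)!t}
      = (+) (length B) ` {t. a \<le> t \<and> t < b \<and> d \<le> r!t}" (is "?L = ?R")
  proof
    show "?L \<subseteq> ?R"
    proof
      fix x assume "x \<in> ?L"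
      then show "x \<in> ?R" by (intro image_eqI[of _ _ "x - length B"]) (auto simp: nth_append)
    qed
  qed (auto simp: nth_append)
  then show ?thesis unfolding count_ge_def by (simp add: card_image)
qed

lemma admissible_append:
  assumes "valid_seq q r"
  shows "admissible q j K (B @ r) \<longleftrightarrow> admissible q j K B \<and> admissible q j K r"
proof safe
  assume h: "admissible q j K (B @ r)"
  show "admissible q j K B" unfolding admissible_def
  proof (intro allI impI)
    fix a b d assume ab: "a < b" "b \<le> length B" "cut_free B a b" "j \<le> d" "d \<le> q"
    then show "count_ge B d a b \<le> K d"
      using h[unfolded admissible_def, rule_format, of a b d]
      by (simp add: cut_free_append_left[OF assms ab(2)] count_ge_append_left[OF ab(2)])
  qed
  show "admissible q j K r" unfolding admissible_def
  proof (intro allI impI)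
    fix a b d assume ab: "a < b" "b \<le> length r" "cut_free r a b" "j \<le> d" "d \<le> q"
    then show "count_ge r d a b \<le> K d"
      using h[unfolded admissible_def, rule_format, of "length B + a" "length B + b" d]
      by (simp add: cut_free_append_right count_ge_append_right)
  qed
next
  assume hB: "admissible q j K B" and hr: "admissible q j K r"
  show "admissible q j K (B @ r)" unfolding admissible_def
  proof (intro allI impI)
    fix a b d assume ab: "a < b" "b \<le> length (B @ r)" "cut_free (B @ r) a b" "j \<le> d" "d \<le> q"
    have "\<not> (a < length B \<and> length B < b)"
      using ab(3) is_cut_append_length[OF assms, of B] unfolding cut_free_def by auto
    then consider "b \<le> length B" | "length B \<le> a" by linarith
    then show "count_ge (B @ r) d a b \<le> K d"
    proof cases
      case 1
      then show ?thesis using hB ab cut_free_append_left[OF assms 1] count_ge_append_left[OF 1]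
        unfolding admissible_def by auto
    next
      case 2
      then obtain a' b' where "a = length B + a'" "b = length B + b'"
        using ab(1) by (intro that[of "a - length B" "b - length B"]) auto
      then show ?thesis using hr ab cut_free_append_right count_ge_append_right
        unfolding admissible_def by auto
    qed
  qed
qed

lemma adm_seqs_0: "adm_seqs q j K 0 = {[]}"
  unfolding adm_seqs_def valid_seq_def admissible_def by auto

lemma adm_blocks_0: "adm_blocks q j K 0 = {}"
  unfolding adm_blocks_def adm_seqs_def is_block_def by auto

lemma finite_adm_seqs: "finite (adm_seqs q j K m)"
proof -
  have "adm_seqs q j K m \<subseteq> {xs. set xs \<subseteq> {0..q} \<and> length xs = m}"
    unfolding adm_seqs_def valid_seq_def by (auto simp: in_set_conv_nth)
  then show ?thesis using finite_lists_length_eq[of "{0..q}" m] finite_subset by blast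
qed

lemma finite_adm_blocks: "finite (adm_blocks q j K l)"
  unfolding adm_blocks_def using finite_adm_seqs by simp

lemma adm_seqs_split_first_block:
  assumes r: "r \<in> adm_seqs q j K m" and m: "1 \<le> m"
  obtains l where "l \<in> {1..m}" "take l r \<in> adm_blocks q j K l" "drop l r \<in> adm_seqs q j K (m - l)"
proof -
  have len: "length r = m" and v: "valid_seq q r" and g: "admissible q j K r"
    using r unfolding adm_seqs_def by auto
  define l where "l = (LEAST c. 0 < c \<and> is_cut r c)"
  have ex: "0 < m \<and> is_cut r m" using m is_cut_length[of r] len by auto
  have l1: "0 < l \<and> is_cut r l" unfolding l_def by (rule LeastI[of _ m]) (use ex in auto)
  have l2: "l \<le> m" unfolding l_def by (rule Least_le) (use ex in auto)
  have vd: "valid_seq q (drop l r)" using valid_seq_drop[OF v] l1 by auto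
  have lt: "length (take l r) = l" using l2 len by auto
  have rr: "r = take l r @ drop l r" by simp
  have "cut_free (take l r) 0 l" unfolding cut_free_def
  proof (intro allI impI notI)
    fix c assume c: "0 < c" "c < l" "is_cut (take l r) c"
    then have "is_cut r c" using is_cut_append_left[OF vd, of c "take l r"] lt rr by auto
    then have "l \<le> c" unfolding l_def using c by (intro Least_le) auto
    then show False using c by auto
  qed
  then have "is_block (take l r)" unfolding is_block_def using l1 lt by auto
  moreover have "admissible q j K (take l r) \<and> admissible q j K (drop l r)"
    using g admissible_append[OF vd, of j K "take l r"] by simp
  ultimately show ?thesis
    using that[of l] l1 l2 lt vd valid_seq_take[OF v] len
    unfolding adm_blocks_def adm_seqs_def by auto
qed

lemma block_prefix_not_shorter:
  assumes "B1 @ r1 = B2 @ r2" "B1 \<noteq> []" "is_block B2" "valid_seq q r1" "valid_seq q r2"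
  shows "\<not> length B1 < length B2"
proof
  assume lt: "length B1 < length B2"
  have "is_cut (B2 @ r2) (length B1)" using is_cut_append_length[OF assms(4)] assms(1) by metis
  then have "is_cut B2 (length B1)" using is_cut_append_left[OF assms(5)] lt by simp
  then show False using assms(2,3) lt unfolding is_block_def cut_free_def by auto
qed

lemma adm_seqs_eq_UN_blocks:
  assumes "1 \<le> m"
  shows "adm_seqs q j K m
    = (\<Union>l\<in>{1..m}. (\<lambda>(B, r). B @ r) ` (adm_blocks q j K l \<times> adm_seqs q j K (m - l)))"
proof (intro equalityI subsetI)
  fix r assume "r \<in> adm_seqs q j K m"
  then obtain l where "l \<in> {1..m}" "take l r \<in> adm_blocks q j K l" "drop l r \<in> adm_seqs q j K (m - l)"
    using adm_seqs_split_first_block assms by blast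
  then show "r \<in> (\<Union>l\<in>{1..m}. (\<lambda>(B, r). B @ r) ` (adm_blocks q j K l \<times> adm_seqs q j K (m - l)))"
    by (auto intro!: bexI[of _ l] image_eqI[of _ _ "(take l r, drop l r)"])
next
  fix x assume "x \<in> (\<Union>l\<in>{1..m}. (\<lambda>(B, r). B @ r) ` (adm_blocks q j K l \<times> adm_seqs q j K (m - l)))"
  then show "x \<in> adm_seqs q j K m"
    using valid_seq_append admissible_append unfolding adm_blocks_def adm_seqs_def by auto
qed

lemma card_adm_seqs_rec:
  assumes m: "1 \<le> m"
  shows "card (adm_seqs q j K m) = (\<Sum>l=1..m. card (adm_blocks q j K l) * card (adm_seqs q j K (m - l)))"
proof -
  let ?A = "\<lambda>l. (\<lambda>(B, r). B @ r) ` (adm_blocks q j K l \<times> adm_seqs q j K (m - l))"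
  have inj: "inj_on (\<lambda>(B, r). B @ r) (adm_blocks q j K l \<times> adm_seqs q j K (m - l))" for l
    unfolding inj_on_def adm_blocks_def adm_seqs_def by auto
  have disj: "?A l1 \<inter> ?A l2 = {}" if "l1 \<noteq> l2" for l1 l2
  proof (rule ccontr)
    assume "?A l1 \<inter> ?A l2 \<noteq> {}"
    then obtain B1 r1 B2 r2 where e: "B1 @ r1 = B2 @ r2"
      and B: "B1 \<in> adm_blocks q j K l1" "B2 \<in> adm_blocks q j K l2"
      and r: "r1 \<in> adm_seqs q j K (m - l1)" "r2 \<in> adm_seqs q j K (m - l2)" by auto
    have "is_block B1" "is_block B2" "valid_seq q r1" "valid_seq q r2"
      using B r unfolding adm_blocks_def adm_seqs_def by auto
    then have "length B1 = length B2"
      using block_prefix_not_shorter[OF e] block_prefix_not_shorter[OF e[symmetric]]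
      unfolding is_block_def by (meson linorder_neqE_nat)
    then show False using B that unfolding adm_blocks_def adm_seqs_def by auto
  qed
  have "card (adm_seqs q j K m) = (\<Sum>l\<in>{1..m}. card (?A l))"
    unfolding adm_seqs_eq_UN_blocks[OF m]
    by (rule card_UN_disjoint) (use disj finite_adm_blocks finite_adm_seqs in auto)
  also have "\<dots> = (\<Sum>l=1..m. card (adm_blocks q j K l) * card (adm_seqs q j K (m - l)))"
    by (intro sum.cong refl) (simp add: card_image[OF inj] card_cartesian_product)
  finally show ?thesis .
qed

section \<open>The hereditary property of admissible sequences\<close>

definition graph_of_seq :: "nat list \<Rightarrow> ograph" where
  "graph_of_seq r = (length r,
     {e. \<exists>i t. i < t \<and> t < length r \<and> t \<le> i + r!t \<and> e = {Suc i, Suc t}})"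

definition seq_property :: "nat \<Rightarrow> nat \<Rightarrow> (nat \<Rightarrow> nat) \<Rightarrow> ograph set" where
  "seq_property q j K = graph_of_seq ` {r. valid_seq q r \<and> admissible q j K r}"

lemma edge_graph_of_seq:
  assumes "i < t" "t < length r"
  shows "{Suc i, Suc t} \<in> snd (graph_of_seq r) \<longleftrightarrow> t \<le> i + r!t"
proof
  assume "{Suc i, Suc t} \<in> snd (graph_of_seq r)"
  then obtain i' t' where h: "i' < t'" "t' \<le> i' + r!t'" "{Suc i, Suc t} = {Suc i', Suc t'}"
    unfolding graph_of_seq_def by auto
  then have "i = i' \<and> t = t'" using assms(1) by (auto simp: doubleton_eq_iff)
  then show "t \<le> i + r!t" using h by auto
qed (use assms in \<open>auto simp: graph_of_seq_def\<close>)

lemma graph_of_seq_inj: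
  assumes "valid_seq q r1" "valid_seq q r2" "length r1 = length r2"
    and "snd (graph_of_seq r1) = snd (graph_of_seq r2)"
  shows "r1 = r2"
proof (rule nth_equalityI)
  show "length r1 = length r2" by fact
  have less: False if "t < length r1" "r1!t < r2!t" "valid_seq q r2" "length r1 = length r2"
    "snd (graph_of_seq r1) = snd (graph_of_seq r2)" for t r1 r2
  proof -
    have le: "r2!t \<le> t" using that unfolding valid_seq_def by auto
    define i where "i = t - r2!t"
    have it: "i < t" using that le unfolding i_def by auto
    have "t \<le> i + r2!t" unfolding i_def using le by auto
    then have "{Suc i, Suc t} \<in> snd (graph_of_seq r2)" using edge_graph_of_seq[OF it, of r2] that by auto
    then have "t \<le> i + r1!t" using edge_graph_of_seq[OF it, of r1] that by auto
    then show False using that le unfolding i_def by auto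
  qed
  fix t assume "t < length r1"
  then show "r1!t = r2!t"
    using less[of t r1 r2] less[of t r2 r1] assms by (metis linorder_neqE_nat)
qed

lemma is_ograph_graph_of_seq: "is_ograph (graph_of_seq r)"
  unfolding is_ograph_def
proof
  fix e assume "e \<in> snd (graph_of_seq r)"
  then obtain i t where "i < t" "t < length r" "e = {Suc i, Suc t}" unfolding graph_of_seq_def by auto
  then show "e \<in> {e. \<exists>i j. i \<in> {1..fst (graph_of_seq r)} \<and> j \<in> {1..fst (graph_of_seq r)} \<and> i \<noteq> j \<and> e = {i, j}}"
    by (intro CollectI exI[of _ "Suc i"] exI[of _ "Suc t"]) (auto simp: graph_of_seq_def)
qed

lemma level_seq_property:
  "level (seq_property q j K) m = (\<lambda>r. snd (graph_of_seq r)) ` adm_seqs q j K m"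
proof (intro equalityI subsetI)
  fix E assume "E \<in> level (seq_property q j K) m"
  then obtain r where r: "(m, E) = graph_of_seq r" "valid_seq q r" "admissible q j K r"
    unfolding level_def seq_property_def by auto
  then have "length r = m" "E = snd (graph_of_seq r)" unfolding graph_of_seq_def by auto
  then show "E \<in> (\<lambda>r. snd (graph_of_seq r)) ` adm_seqs q j K m" using r unfolding adm_seqs_def by auto
next
  fix E assume "E \<in> (\<lambda>r. snd (graph_of_seq r)) ` adm_seqs q j K m"
  then obtain r where r: "E = snd (graph_of_seq r)" "length r = m" "valid_seq q r" "admissible q j K r"
    unfolding adm_seqs_def by auto
  then have "graph_of_seq r = (m, E)" unfolding graph_of_seq_def by auto
  then show "E \<in> level (seq_property q j K) m" using r unfolding level_def seq_property_def by (auto simp: image_iff)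
qed

lemma card_level_seq_property:
  "card (level (seq_property q j K) m) = card (adm_seqs q j K m)"
  unfolding level_seq_property
  by (rule card_image) (auto simp: inj_on_def adm_seqs_def intro: graph_of_seq_inj)

text \<open>Vertices are numbered from 1, positions in sequences from 0.\<close>

definition enum_pos :: "nat set \<Rightarrow> nat \<Rightarrow> nat" where
  "enum_pos S i = sorted_list_of_set S ! i - 1"

text \<open>The back-neighbours of a vertex form an interval ending just below it, and this survives
  passing to an induced subgraph; so the induced subgraph on \<open>S\<close> is again the graph of a sequence,
  namely of the following one.\<close>

definition restrict_seq :: "nat list \<Rightarrow> nat set \<Rightarrow> nat list" where
  "restrict_seq r S =
     map (\<lambda>b. card {a. a < b \<and> enum_pos S b \<le> enum_pos S a + r!(enum_pos S b)}) [0..<card S]"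

lemma nth_sorted_list_of_set_mem: "finite S \<Longrightarrow> i < card S \<Longrightarrow> sorted_list_of_set S ! i \<in> S"
  using nth_mem[of i "sorted_list_of_set S"] by simp

lemma Suc_enum_pos:
  assumes "S \<subseteq> {1..m}" "i < card S"
  shows "Suc (enum_pos S i) = sorted_list_of_set S ! i"
  using nth_sorted_list_of_set_mem[OF finite_subset[OF assms(1)] assms(2)] assms(1)
  unfolding enum_pos_def by fastforce

lemma enum_pos_less:
  assumes "S \<subseteq> {1..m}" "i < card S"
  shows "enum_pos S i < m"
  using nth_sorted_list_of_set_mem[OF finite_subset[OF assms(1)] assms(2)] assms(1)
  unfolding enum_pos_def by fastforce

lemma enum_pos_strict_mono:
  assumes S: "S \<subseteq> {1..m}" and "i < k" "k < card S"
  shows "enum_pos S i < enum_pos S k"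
proof -
  have "sorted_list_of_set S ! i < sorted_list_of_set S ! k"
    using sorted_wrt_nth_less[OF strict_sorted_list_of_set[of S]] assms by simp
  then show ?thesis using Suc_enum_pos[OF S] assms by (metis Suc_less_SucD order.strict_trans)
qed

lemma enum_pos_mono:
  assumes "S \<subseteq> {1..m}" "i \<le> k" "k < card S"
  shows "enum_pos S i \<le> enum_pos S k"
  using enum_pos_strict_mono[OF assms(1), of i k] assms by (cases "i = k") auto

lemma inj_on_enum_pos:
  assumes "S \<subseteq> {1..m}" "A \<subseteq> {..<card S}"
  shows "inj_on (enum_pos S) A"
  using enum_pos_strict_mono[OF assms(1)] assms(2) unfolding inj_on_def
  by (metis lessThan_iff linorder_neqE_nat nat_less_le subsetD)

lemma up_closed_iff_card:
  assumes up: "\<And>a a'. a \<le> a' \<Longrightarrow> a' < b \<Longrightarrow> P a \<Longrightarrow> P a'" and ab: "a < b"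
  shows "P a \<longleftrightarrow> b \<le> a + card {a'. a' < b \<and> P a'}"
proof
  assume "P a"
  then have "{a..<b} \<subseteq> {a'. a' < b \<and> P a'}" using up by auto
  then have "card {a..<b} \<le> card {a'. a' < b \<and> P a'}" by (intro card_mono) auto
  then show "b \<le> a + card {a'. a' < b \<and> P a'}" by simp
next
  assume h: "b \<le> a + card {a'. a' < b \<and> P a'}"
  show "P a"
  proof (rule ccontr)
    assume "\<not> P a"
    then have "{a'. a' < b \<and> P a'} \<subseteq> {Suc a..<b}"
      using up ab by (auto simp: not_less_eq_eq[symmetric])
    then have "card {a'. a' < b \<and> P a'} \<le> card {Suc a..<b}" by (intro card_mono) auto
    then show False using h ab by simp
  qed
qed

lemma length_restrict_seq [simp]: "length (restrict_seq r S) = card S"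
  unfolding restrict_seq_def by simp

lemma nth_restrict_seq:
  "b < card S \<Longrightarrow>
    restrict_seq r S ! b = card {a. a < b \<and> enum_pos S b \<le> enum_pos S a + r!(enum_pos S b)}"
  unfolding restrict_seq_def by simp

lemma restrict_seq_adjacent_iff:
  assumes S: "S \<subseteq> {1..length r}" and ab: "a < b" "b < card S"
  shows "enum_pos S b \<le> enum_pos S a + r!(enum_pos S b) \<longleftrightarrow> b \<le> a + restrict_seq r S ! b"
  unfolding nth_restrict_seq[OF ab(2)]
proof (rule up_closed_iff_card[OF _ ab(1)])
  fix a a' assume "a \<le> a'" "a' < b" "enum_pos S b \<le> enum_pos S a + r ! enum_pos S b"
  then show "enum_pos S b \<le> enum_pos S a' + r ! enum_pos S b"
    using enum_pos_mono[OF S, of a a'] ab by simp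
qed

lemma restrict_seq_le:
  assumes S: "S \<subseteq> {1..length r}" and v: "valid_seq q r" and b: "b < card S"
  shows "restrict_seq r S ! b \<le> b" "restrict_seq r S ! b \<le> r!(enum_pos S b)"
proof -
  let ?X = "{a. a < b \<and> enum_pos S b \<le> enum_pos S a + r!(enum_pos S b)}"
  show "restrict_seq r S ! b \<le> b" unfolding nth_restrict_seq[OF b]
    using card_mono[of "{..<b}" ?X] by auto
  have R: "r!(enum_pos S b) \<le> enum_pos S b"
    using v enum_pos_less[OF S b] unfolding valid_seq_def by auto
  have "enum_pos S ` ?X \<subseteq> {enum_pos S b - r!(enum_pos S b)..<enum_pos S b}"
    using enum_pos_strict_mono[OF S] b by fastforce
  moreover have "inj_on (enum_pos S) ?X" by (rule inj_on_enum_pos[OF S]) (use b in auto)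
  ultimately have "card ?X \<le> card {enum_pos S b - r!(enum_pos S b)..<enum_pos S b}"
    using card_inj_on_le by blast
  then show "restrict_seq r S ! b \<le> r!(enum_pos S b)" unfolding nth_restrict_seq[OF b] using R by simp
qed

lemma valid_seq_restrict_seq:
  assumes S: "S \<subseteq> {1..length r}" and v: "valid_seq q r"
  shows "valid_seq q (restrict_seq r S)"
  unfolding valid_seq_def length_restrict_seq
proof (intro allI impI conjI)
  fix t assume t: "t < card S"
  show "restrict_seq r S ! t \<le> t" using restrict_seq_le[OF S v t] by simp
  have "r!(enum_pos S t) \<le> q" using v enum_pos_less[OF S t] unfolding valid_seq_def by auto
  then show "restrict_seq r S ! t \<le> q" using restrict_seq_le[OF S v t] by simp
qed

lemma edge_restrict_seq_iff:
  assumes S: "S \<subseteq> {1..length r}" and ab: "a < b" "b < card S"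
  shows "{Suc (enum_pos S a), Suc (enum_pos S b)} \<in> snd (graph_of_seq r)
    \<longleftrightarrow> {Suc a, Suc b} \<in> snd (graph_of_seq (restrict_seq r S))"
proof -
  have "{Suc (enum_pos S a), Suc (enum_pos S b)} \<in> snd (graph_of_seq r)
      \<longleftrightarrow> enum_pos S b \<le> enum_pos S a + r!(enum_pos S b)"
    using edge_graph_of_seq enum_pos_strict_mono[OF S ab] enum_pos_less[OF S ab(2)] by blast
  also have "\<dots> \<longleftrightarrow> b \<le> a + restrict_seq r S ! b" by (rule restrict_seq_adjacent_iff[OF S ab])
  also have "\<dots> \<longleftrightarrow> {Suc a, Suc b} \<in> snd (graph_of_seq (restrict_seq r S))"
    by (rule edge_graph_of_seq[symmetric]) (use ab in auto)
  finally show ?thesis .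
qed

lemma induced_osub_graph_of_seq:
  assumes S: "S \<subseteq> {1..length r}"
  shows "induced_osub (graph_of_seq r) S = graph_of_seq (restrict_seq r S)"
proof -
  let ?f = "\<lambda>i. sorted_list_of_set S ! (i - 1)"
  let ?E = "{e. \<exists>i j. i \<in> {1..card S} \<and> j \<in> {1..card S} \<and> i \<noteq> j \<and> e = {i, j}
               \<and> {?f i, ?f j} \<in> snd (graph_of_seq r)}"
  have f: "?f (Suc a) = Suc (enum_pos S a)" if "a < card S" for a
    using Suc_enum_pos[OF S that] by simp
  have "?E = snd (graph_of_seq (restrict_seq r S))"
  proof (intro equalityI subsetI)
    fix e assume "e \<in> ?E"
    then obtain i j where h: "i \<in> {1..card S}" "j \<in> {1..card S}" "i \<noteq> j"
        "e = {i, j}" "{?f i, ?f j} \<in> snd (graph_of_seq r)"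
      by blast
    define a where "a = min i j - 1"
    define b where "b = max i j - 1"
    have ab: "a < b" "b < card S" using h unfolding a_def b_def by auto
    have "e = {Suc a, Suc b}" "{?f i, ?f j} = {?f (Suc a), ?f (Suc b)}"
      using h unfolding a_def b_def by (auto simp: min_def max_def insert_commute)
    then show "e \<in> snd (graph_of_seq (restrict_seq r S))"
      using h(5) edge_restrict_seq_iff[OF S ab] f[of a] f[of b] ab by simp
  next
    fix e assume e: "e \<in> snd (graph_of_seq (restrict_seq r S))"
    then obtain a b where ab: "a < b" "b < card S" "e = {Suc a, Suc b}"
      unfolding graph_of_seq_def by auto
    then have "{?f (Suc a), ?f (Suc b)} \<in> snd (graph_of_seq r)"
      using edge_restrict_seq_iff[OF S ab(1,2)] e f[of a] f[of b] by simp
    then show "e \<in> ?E" using ab by (intro CollectI exI[of _ "Suc a"] exI[of _ "Suc b"]) auto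
  qed
  then show ?thesis unfolding induced_osub_def Let_def by (simp add: graph_of_seq_def)
qed

lemma less_card_enum_pos_less_iff:
  assumes S: "S \<subseteq> {1..m}" and i: "i < card S"
  shows "i < card {k. k < card S \<and> enum_pos S k < c} \<longleftrightarrow> enum_pos S i < c"
    (is "i < card ?D \<longleftrightarrow> _")
proof
  have fin: "finite ?D" by simp
  show "i < card ?D" if "enum_pos S i < c"
  proof -
    have "{..i} \<subseteq> ?D" using enum_pos_mono[OF S _ i] that i by fastforce
    then have "card {..i} \<le> card ?D" by (rule card_mono[OF fin])
    then show ?thesis by simp
  qed
  show "enum_pos S i < c" if lt: "i < card ?D"
  proof (rule ccontr)
    assume ge: "\<not> enum_pos S i < c"
    have "?D \<subseteq> {..<i}"
    proof
      fix k assume k: "k \<in> ?D"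
      show "k \<in> {..<i}"
      proof (rule ccontr)
        assume "k \<notin> {..<i}"
        then have "enum_pos S i \<le> enum_pos S k" using enum_pos_mono[OF S, of i k] k by simp
        then show False using k ge by simp
      qed
    qed
    then show False using card_mono[of "{..<i}" ?D] lt by simp
  qed
qed

lemma is_cut_restrict_seq:
  assumes S: "S \<subseteq> {1..length r}" and c: "is_cut r c"
  shows "is_cut (restrict_seq r S) (card {k. k < card S \<and> enum_pos S k < c})"
    (is "is_cut _ (card ?D)")
  unfolding is_cut_def length_restrict_seq
proof (intro allI impI)
  fix i assume i: "card ?D \<le> i" "i < card S"
  have "c \<le> enum_pos S i" using less_card_enum_pos_less_iff[OF S i(2), of c] i(1) by linarith
  then have cut: "r!(enum_pos S i) + c \<le> enum_pos S i"
    using c enum_pos_less[OF S i(2)] unfolding is_cut_def by auto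
  have "{a. a < i \<and> enum_pos S i \<le> enum_pos S a + r!(enum_pos S i)} \<subseteq> {card ?D..<i}"
  proof
    fix a assume a: "a \<in> {a. a < i \<and> enum_pos S i \<le> enum_pos S a + r!(enum_pos S i)}"
    then have "c \<le> enum_pos S a" using cut by simp
    then have "\<not> a < card ?D" using less_card_enum_pos_less_iff[OF S, of a c] a i(2) by simp
    then show "a \<in> {card ?D..<i}" using a by simp
  qed
  then have "card {a. a < i \<and> enum_pos S i \<le> enum_pos S a + r!(enum_pos S i)} \<le> i - card ?D"
    using card_mono[of "{card ?D..<i}"] by fastforce
  then show "restrict_seq r S ! i + card ?D \<le> i" using nth_restrict_seq[OF i(2)] i by simp
qed

lemma cut_free_restrict_seq:
  assumes S: "S \<subseteq> {1..length r}" and ab: "a < b" "b \<le> card S"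
    and cf: "cut_free (restrict_seq r S) a b"
  shows "cut_free r (enum_pos S a) (Suc (enum_pos S (b - 1)))"
  unfolding cut_free_def
proof (intro allI impI notI)
  fix c assume c: "enum_pos S a < c" "c < Suc (enum_pos S (b - 1))" "is_cut r c"
  let ?D = "{k. k < card S \<and> enum_pos S k < c}"
  have "a < card ?D" using less_card_enum_pos_less_iff[OF S, of a c] c(1) ab by simp
  moreover have "\<not> b - 1 < card ?D" using less_card_enum_pos_less_iff[OF S, of "b - 1" c] c(2) ab by simp
  then have "card ?D < b" using ab by simp
  ultimately show False using cf is_cut_restrict_seq[OF S c(3)] unfolding cut_free_def by blast
qed

lemma count_ge_restrict_seq_le:
  assumes S: "S \<subseteq> {1..length r}" and v: "valid_seq q r" and ab: "a < b" "b \<le> card S"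
  shows "count_ge (restrict_seq r S) d a b \<le> count_ge r d (enum_pos S a) (Suc (enum_pos S (b - 1)))"
  unfolding count_ge_def
proof (rule card_inj_on_le)
  show "inj_on (enum_pos S) {t. a \<le> t \<and> t < b \<and> d \<le> restrict_seq r S ! t}"
    by (rule inj_on_enum_pos[OF S]) (use ab in auto)
  show "enum_pos S ` {t. a \<le> t \<and> t < b \<and> d \<le> restrict_seq r S ! t}
      \<subseteq> {t. enum_pos S a \<le> t \<and> t < Suc (enum_pos S (b - 1)) \<and> d \<le> r ! t}"
  proof clarify
    fix t assume t: "a \<le> t" "t < b" "d \<le> restrict_seq r S ! t"
    then show "enum_pos S a \<le> enum_pos S t \<and> enum_pos S t < Suc (enum_pos S (b - 1))
        \<and> d \<le> r ! enum_pos S t"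
      using restrict_seq_le(2)[OF S v, of t] enum_pos_mono[OF S, of a t] enum_pos_mono[OF S, of t "b - 1"] ab
      by (simp add: le_imp_less_Suc less_Suc_eq_le)
  qed
qed auto

lemma admissible_restrict_seq:
  assumes S: "S \<subseteq> {1..length r}" and v: "valid_seq q r" and g: "admissible q j K r"
  shows "admissible q j K (restrict_seq r S)"
  unfolding admissible_def length_restrict_seq
proof (intro allI impI)
  fix a b d assume ab: "a < b" "b \<le> card S" "cut_free (restrict_seq r S) a b" "j \<le> d" "d \<le> q"
  have "enum_pos S a < Suc (enum_pos S (b - 1))" using enum_pos_mono[OF S, of a "b - 1"] ab by linarith
  moreover have "Suc (enum_pos S (b - 1)) \<le> length r"
    using enum_pos_less[OF S, of "b - 1"] ab by (simp add: Suc_leI)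
  ultimately have "count_ge r d (enum_pos S a) (Suc (enum_pos S (b - 1))) \<le> K d"
    using g cut_free_restrict_seq[OF S ab(1-3)] ab(4,5) unfolding admissible_def by blast
  then show "count_ge (restrict_seq r S) d a b \<le> K d"
    using count_ge_restrict_seq_le[OF S v ab(1,2), of d] by linarith
qed

lemma hereditary_seq_property: "hereditary (seq_property q j K)"
  unfolding hereditary_def
proof safe
  fix G assume "G \<in> seq_property q j K"
  then show "is_ograph G" unfolding seq_property_def using is_ograph_graph_of_seq by auto
next
  fix G S assume G: "G \<in> seq_property q j K" and S: "S \<subseteq> {1..fst G}"
  then obtain r where r: "G = graph_of_seq r" "valid_seq q r" "admissible q j K r"
    unfolding seq_property_def by auto
  have S': "S \<subseteq> {1..length r}" using S r unfolding graph_of_seq_def by simp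
  show "induced_osub G S \<in> seq_property q j K"
    unfolding r(1) induced_osub_graph_of_seq[OF S'] seq_property_def
    using valid_seq_restrict_seq[OF S' r(2)] admissible_restrict_seq[OF S' r(2,3)] by auto
qed

section \<open>Counting blocks\<close>

lemma replicate_0_in_adm_seqs:
  assumes "1 \<le> j"
  shows "replicate m 0 \<in> adm_seqs q j K m"
proof -
  have "count_ge (replicate m 0) d a b = 0" if "j \<le> d" "b \<le> m" for a b d
    using assms that unfolding count_ge_def by auto
  then show ?thesis unfolding adm_seqs_def valid_seq_def admissible_def by auto
qed

lemma card_adm_seqs_pos: "1 \<le> j \<Longrightarrow> 0 < card (adm_seqs q j K m)"
  using replicate_0_in_adm_seqs finite_adm_seqs card_gt_0_iff by blast

lemma count_ge_le: "count_ge r d a b \<le> b - a"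
proof -
  have "count_ge r d a b \<le> card {a..<b}" unfolding count_ge_def by (rule card_mono) auto
  then show ?thesis by simp
qed

lemma count_ge_block_le:
  assumes r: "r \<in> adm_blocks q j K l" and d: "j \<le> d" "d \<le> q"
  shows "count_ge r d 0 l \<le> K d"
proof -
  have "admissible q j K r" "is_block r" "length r = l"
    using r unfolding adm_blocks_def adm_seqs_def by auto
  then show ?thesis using d unfolding admissible_def is_block_def by blast
qed

text \<open>Every position inside a block is bridged by an edge, and each of the at most \<open>K 1\<close>
  vertices with a back-neighbour bridges at most \<open>q\<close> positions.\<close>

lemma length_adm_block_le:
  assumes r: "r \<in> adm_blocks q 1 K l" and q: "1 \<le> q"
  shows "l \<le> q * K 1 + 1"
proof -
  have len: "length r = l" and v: "valid_seq q r" and blk: "is_block r"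
    using r unfolding adm_blocks_def adm_seqs_def by auto
  define T where "T = {t. 0 \<le> t \<and> t < l \<and> 1 \<le> r!t}"
  have "card T \<le> K 1" using count_ge_block_le[OF r _ q] unfolding count_ge_def T_def by simp
  have cover: "{1..<l} \<subseteq> (\<Union>t\<in>T. {t + 1 - r!t..t})"
  proof
    fix c assume c: "c \<in> {1..<l}"
    then have "\<not> is_cut r c" using blk len unfolding is_block_def cut_free_def by auto
    then obtain t where t: "c \<le> t" "t < l" "\<not> r!t + c \<le> t" unfolding is_cut_def len by auto
    then show "c \<in> (\<Union>t\<in>T. {t + 1 - r!t..t})" unfolding T_def by (intro UN_I[of t]) auto
  qed
  have "l - 1 \<le> card (\<Union>t\<in>T. {t + 1 - r!t..t})"
    using card_mono[OF _ cover] unfolding T_def by simp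
  also have "\<dots> \<le> (\<Sum>t\<in>T. card {t + 1 - r!t..t})" by (rule card_UN_le) (simp add: T_def)
  also have "\<dots> \<le> (\<Sum>t\<in>T. q)"
  proof (rule sum_mono)
    fix t assume "t \<in> T"
    then have "r!t \<le> t" "r!t \<le> q" using v len unfolding T_def valid_seq_def by auto
    then show "card {t + 1 - r!t..t} \<le> q" by simp
  qed
  also have "\<dots> \<le> q * K 1" using \<open>card T \<le> K 1\<close> by simp
  finally show ?thesis by simp
qed

text \<open>Pad the sorted enumeration of \<open>T\<close> with copies of \<open>l\<close>.\<close>

lemma card_bounded_subsets_le: "card {T. T \<subseteq> {..<l} \<and> card T \<le> k} \<le> (l + 1) ^ k"
proof -
  let ?pad = "\<lambda>T. sorted_list_of_set T @ replicate (k - card T) l"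
  let ?A = "{T. T \<subseteq> {..<l} \<and> card T \<le> k}"
  have fin: "finite T" if "T \<in> ?A" for T using that finite_subset by blast
  have recover: "set (?pad T) \<inter> {..<l} = T" if "T \<in> ?A" for T
  proof -
    have "set (?pad T) \<subseteq> T \<union> {l}" "T \<subseteq> set (?pad T)" using fin[OF that] by auto
    then show ?thesis using that by auto
  qed
  have "inj_on ?pad ?A"
  proof (rule inj_onI)
    fix T T' assume "T \<in> ?A" "T' \<in> ?A" "?pad T = ?pad T'"
    then show "T = T'" using recover by metis
  qed
  moreover have "?pad ` ?A \<subseteq> {xs. set xs \<subseteq> {0..l} \<and> length xs = k}"
  proof (rule image_subsetI)
    fix T assume T: "T \<in> ?A"
    then have "set (?pad T) \<subseteq> {0..l}" "length (?pad T) = k" using fin[OF T] by auto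
    then show "?pad T \<in> {xs. set xs \<subseteq> {0..l} \<and> length xs = k}" by simp
  qed
  ultimately have "card ?A \<le> card {xs. set xs \<subseteq> {0..l} \<and> length xs = k}"
    by (intro card_inj_on_le) (auto simp: finite_lists_length_eq)
  then show ?thesis by (simp add: card_lists_length_eq)
qed

text \<open>A block is determined by the set of its entries equal to \<open>q\<close> (at most \<open>K q\<close> of them)
  together with the remaining entries, which are below \<open>q\<close>.\<close>

lemma card_adm_blocks_le:
  assumes jq: "j \<le> q" and q: "1 \<le> q"
  shows "card (adm_blocks q j K l) \<le> (l + 1) ^ K q * q ^ l"
proof -
  let ?T = "\<lambda>r::nat list. {t. t < l \<and> q \<le> r!t}"
  let ?cap = "map (\<lambda>v. if q \<le> v then 0 else v)"
  let ?C = "{T. T \<subseteq> {..<l} \<and> card T \<le> K q} \<times> {ys. set ys \<subseteq> {..<q} \<and> length ys = l}"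
  have "inj_on (\<lambda>r. (?T r, ?cap r)) (adm_blocks q j K l)"
  proof (rule inj_onI, rule nth_equalityI)
    fix r1 r2 assume r: "r1 \<in> adm_blocks q j K l" "r2 \<in> adm_blocks q j K l"
      and e: "(?T r1, ?cap r1) = (?T r2, ?cap r2)"
    then show len: "length r1 = length r2" unfolding adm_blocks_def adm_seqs_def by simp
    fix t assume t: "t < length r1"
    have le: "r1!t \<le> q" "r2!t \<le> q" and "length r1 = l"
      using r t len unfolding adm_blocks_def adm_seqs_def valid_seq_def by auto
    have "t \<in> ?T r1 \<longleftrightarrow> t \<in> ?T r2" using e by simp
    then have "q \<le> r1!t \<longleftrightarrow> q \<le> r2!t" using t \<open>length r1 = l\<close> by simp
    moreover have "?cap r1 ! t = ?cap r2 ! t" using e by simp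
    then have "(if q \<le> r1!t then 0 else r1!t) = (if q \<le> r2!t then 0 else r2!t)" using t len by simp
    ultimately show "r1!t = r2!t" using le by (metis le_antisym)
  qed
  moreover have "(\<lambda>r. (?T r, ?cap r)) ` adm_blocks q j K l \<subseteq> ?C"
  proof (rule image_subsetI)
    fix r assume r: "r \<in> adm_blocks q j K l"
    have "card (?T r) \<le> K q" using count_ge_block_le[OF r jq order_refl] unfolding count_ge_def by simp
    moreover have "set (?cap r) \<subseteq> {..<q}" using q by auto
    moreover have "length r = l" using r unfolding adm_blocks_def adm_seqs_def by simp
    ultimately show "(?T r, ?cap r) \<in> ?C" by auto
  qed
  moreover have "finite {T. T \<subseteq> {..<l} \<and> card T \<le> K q}"
    by (rule finite_subset[of _ "Pow {..<l}"]) auto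
  then have "finite ?C" by (simp add: finite_lists_length_eq)
  ultimately have "card (adm_blocks q j K l) \<le> card ?C" by (rule card_inj_on_le)
  also have "\<dots> \<le> (l + 1) ^ K q * q ^ l"
    using card_bounded_subsets_le[of l "K q"] by (simp add: card_cartesian_product card_lists_length_eq)
  finally show ?thesis .
qed

definition staircase :: "nat \<Rightarrow> nat \<Rightarrow> nat list" where
  "staircase j L = map (\<lambda>t. min t j) [0..<L]"

lemma staircase_in_adm_blocks:
  assumes "1 \<le> j" "j \<le> q" "1 \<le> L"
  shows "staircase j L \<in> adm_blocks q (Suc j) K L"
proof -
  have "count_ge (staircase j L) d a b = 0" if "Suc j \<le> d" "b \<le> L" for a b d
    using that unfolding count_ge_def staircase_def by auto
  moreover have "\<not> is_cut (staircase j L) c" if "0 < c" "c < L" for c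
    using that assms unfolding is_cut_def staircase_def by (auto simp: min_def intro!: exI[of _ c])
  ultimately show ?thesis using assms
    unfolding adm_blocks_def adm_seqs_def valid_seq_def admissible_def is_block_def cut_free_def
    by (auto simp: staircase_def)
qed

lemma staircase_notin_adm_blocks:
  assumes "k < L - j"
  shows "staircase j L \<notin> adm_blocks q j (K(j := k)) L"
proof
  assume h: "staircase j L \<in> adm_blocks q j (K(j := k)) L"
  have jL: "j < L" using assms by simp
  then have "staircase j L ! j = j" by (simp add: staircase_def)
  then have "j \<le> q" using h jL unfolding adm_blocks_def adm_seqs_def valid_seq_def by auto
  then have "count_ge (staircase j L) j 0 L \<le> k" using count_ge_block_le[OF h, of j] by simp
  moreover have "{t. 0 \<le> t \<and> t < L \<and> j \<le> staircase j L ! t} = {j..<L}"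
    unfolding staircase_def by auto
  ultimately show False using assms unfolding count_ge_def by simp
qed

lemma adm_blocks_update_subset: "adm_blocks q j (K(j := k)) l \<subseteq> adm_blocks q (Suc j) K l"
  unfolding adm_blocks_def adm_seqs_def admissible_def by auto

lemma adm_blocks_update_eq:
  assumes "l \<le> k"
  shows "adm_blocks q j (K(j := k)) l = adm_blocks q (Suc j) K l"
proof (rule equalityI[OF adm_blocks_update_subset subsetI])
  fix r assume r: "r \<in> adm_blocks q (Suc j) K l"
  have "count_ge r j a b \<le> k" if "b \<le> length r" for a b
    using count_ge_le[of r j a b] that r assms unfolding adm_blocks_def adm_seqs_def by auto
  then have "admissible q j (K(j := k)) r"
    using r unfolding adm_blocks_def adm_seqs_def admissible_def by (auto simp: le_Suc_eq)
  then show "r \<in> adm_blocks q j (K(j := k)) l" using r unfolding adm_blocks_def adm_seqs_def by auto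
qed

lemma adm_seqs_Suc_top: "adm_seqs q (Suc q) K m = {r. length r = m \<and> valid_seq q r}"
  unfolding adm_seqs_def admissible_def by auto

lemma card_adm_seqs_Suc_top:
  "card (adm_seqs q (Suc q) K (Suc m)) = (min m q + 1) * card (adm_seqs q (Suc q) K m)"
proof -
  have "adm_seqs q (Suc q) K (Suc m) = (\<lambda>(r, v). r @ [v]) ` (adm_seqs q (Suc q) K m \<times> {0..min m q})"
  proof (intro equalityI subsetI)
    fix r assume "r \<in> adm_seqs q (Suc q) K (Suc m)"
    then have r: "length r = Suc m" "valid_seq q r" unfolding adm_seqs_Suc_top by auto
    then have rr: "r = butlast r @ [r ! m]"
      by (metis append_butlast_last_id diff_Suc_1 last_conv_nth list.size(3) nat.distinct(1))
    have "r ! m \<le> min m q" using r unfolding valid_seq_def by auto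
    moreover have "valid_seq q (butlast r)" using r unfolding valid_seq_def by (auto simp: nth_butlast)
    ultimately show "r \<in> (\<lambda>(r, v). r @ [v]) ` (adm_seqs q (Suc q) K m \<times> {0..min m q})"
      unfolding adm_seqs_Suc_top using r by (intro image_eqI[of _ _ "(butlast r, r ! m)"]) (auto simp: rr[symmetric])
  next
    fix x assume "x \<in> (\<lambda>(r, v). r @ [v]) ` (adm_seqs q (Suc q) K m \<times> {0..min m q})"
    then show "x \<in> adm_seqs q (Suc q) K (Suc m)"
      unfolding adm_seqs_Suc_top valid_seq_def by (auto simp: nth_append)
  qed
  moreover have "inj_on (\<lambda>(r, v). r @ [v]) (adm_seqs q (Suc q) K m \<times> {0..min m q})"
    unfolding inj_on_def by auto
  ultimately show ?thesis by (simp add: card_image card_cartesian_product)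
qed

section \<open>Renewal sequences and series\<close>

lemma sum_atLeast1_eq_lessThan_Suc:
  fixes f :: "nat \<Rightarrow> 'a::comm_monoid_add"
  assumes "f 0 = 0"
  shows "(\<Sum>l=1..L. f l) = (\<Sum>l<Suc L. f l)"
proof -
  have "{..<Suc L} = insert 0 {1..L}" by auto
  then show ?thesis using assms by simp
qed

lemma sum_atLeast1_le_of_sums:
  fixes f :: "nat \<Rightarrow> real"
  assumes "f sums s" "\<And>l. 0 \<le> f l"
  shows "(\<Sum>l=1..m. f l) \<le> s"
proof -
  have "(\<Sum>l=1..m. f l) \<le> (\<Sum>l<Suc m. f l)" by (rule sum_mono2) (use assms(2) in auto)
  also have "\<dots> \<le> s" using assms sum_le_suminf[of f "{..<Suc m}"] by (auto simp: sums_iff)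
  finally show ?thesis .
qed

lemma sum_atLeast1_eq_of_sums:
  fixes f :: "nat \<Rightarrow> real"
  assumes "f sums s" "f 0 = 0" "\<And>l. L < l \<Longrightarrow> f l = 0"
  shows "(\<Sum>l=1..L. f l) = s"
proof -
  have "f sums (\<Sum>l<Suc L. f l)" by (rule sums_finite) (use assms(3) in auto)
  then show ?thesis using assms(1) sum_atLeast1_eq_lessThan_Suc[of f L, OF assms(2)] sums_unique2 by metis
qed

lemma renewal_le_pow:
  fixes a b :: "nat \<Rightarrow> real"
  assumes a0: "a 0 \<le> 1" and rec: "\<And>m. 1 \<le> m \<Longrightarrow> a m = (\<Sum>l=1..m. b l * a (m - l))"
    and b: "\<And>l. 0 \<le> b l" and x: "0 < x" and root: "(\<lambda>l. b l / x ^ l) sums 1"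
  shows "a m \<le> x ^ m"
proof (induction m rule: less_induct)
  case (less m)
  show ?case
  proof (cases "m = 0")
    case False
    then have "a m = (\<Sum>l=1..m. b l * a (m - l))" using rec by simp
    also have "\<dots> \<le> (\<Sum>l=1..m. b l * x ^ (m - l))"
      by (intro sum_mono mult_left_mono less.IH) (use b False in auto)
    also have "\<dots> = x ^ m * (\<Sum>l=1..m. b l / x ^ l)"
      unfolding sum_distrib_left using x by (intro sum.cong) (auto simp: power_diff)
    also have "\<dots> \<le> x ^ m"
      using sum_atLeast1_le_of_sums[OF root, of m] b x by (simp add: mult_left_le)
    finally show ?thesis .
  qed (use a0 in simp)
qed

lemma renewal_ge_pow:
  fixes a b :: "nat \<Rightarrow> real"
  assumes rec: "\<And>m. 1 \<le> m \<Longrightarrow> a m = (\<Sum>l=1..m. b l * a (m - l))"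
    and b: "\<And>l. 0 \<le> b l" and supp: "\<And>l. L < l \<Longrightarrow> b l = 0"
    and a: "\<And>m. 0 < a m" and x: "0 < x" and b0: "b 0 = 0" and root: "(\<lambda>l. b l / x ^ l) sums 1"
  obtains c where "0 < c" "\<And>m. c * x ^ m \<le> a m"
proof -
  have eq: "(\<Sum>l=1..L. b l / x ^ l) = 1" by (rule sum_atLeast1_eq_of_sums[OF root]) (simp_all add: b0 supp)
  have L: "1 \<le> L" using eq by (cases L) auto
  define c where "c = Min ((\<lambda>m. a m / x ^ m) ` {..<L})"
  have "0 \<in> {..<L}" using L by simp
  then have "0 < c" unfolding c_def using a x by (subst Min_gr_iff) (auto simp del: lessThan_iff)
  moreover have "c * x ^ m \<le> a m" for m
  proof (induction m rule: less_induct)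
    case (less m)
    show ?case
    proof (cases "m < L")
      case True
      then have "c \<le> a m / x ^ m" unfolding c_def by (intro Min_le) auto
      then show ?thesis using x by (simp add: field_simps)
    next
      case False
      have "c * x ^ m = c * x ^ m * (\<Sum>l=1..L. b l / x ^ l)" using eq by simp
      also have "\<dots> = (\<Sum>l=1..L. b l * (c * x ^ (m - l)))"
        unfolding sum_distrib_left using False x by (intro sum.cong) (auto simp: power_diff)
      also have "\<dots> \<le> (\<Sum>l=1..L. b l * a (m - l))"
        by (intro sum_mono mult_left_mono less.IH) (use b False L in auto)
      also have "\<dots> = (\<Sum>l=1..m. b l * a (m - l))"
        by (rule sum.mono_neutral_left) (use False supp in auto)
      also have "\<dots> = a m" using rec False L by simp
      finally show ?thesis .
    qed
  qed
  ultimately show thesis by (rule that)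
qed

lemma root_tendsto_of_pow_bounds:
  fixes a :: "nat \<Rightarrow> real"
  assumes c: "0 < c" and x: "0 < x"
    and lower: "\<And>m. c * x ^ m \<le> a m" and upper: "\<And>m. a m \<le> x ^ m"
  shows "(\<lambda>m. a m powr (1 / real m)) \<longlonglongrightarrow> x"
proof (rule tendsto_sandwich)
  have root: "(y * x ^ m) powr (1 / real m) = y powr (1 / real m) * x" if "0 < y" "1 \<le> m" for y m
    using that x by (simp add: powr_mult powr_realpow[symmetric] powr_powr)
  show "\<forall>\<^sub>F m in sequentially. c powr (1 / real m) * x \<le> a m powr (1 / real m)"
  proof (rule eventually_sequentiallyI[of 1])
    fix m :: nat assume "1 \<le> m"
    then show "c powr (1 / real m) * x \<le> a m powr (1 / real m)"
      using powr_mono2[of "1 / real m" "c * x ^ m" "a m"] lower[of m] root[of c m] c x by simp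
  qed
  show "\<forall>\<^sub>F m in sequentially. a m powr (1 / real m) \<le> 1 powr (1 / real m) * x"
  proof (rule eventually_sequentiallyI[of 1])
    fix m :: nat assume "1 \<le> m"
    then show "a m powr (1 / real m) \<le> 1 powr (1 / real m) * x"
      using powr_mono2[of "1 / real m" "a m" "1 * x ^ m"] lower[of m] upper[of m] root[of 1 m] c x
      by (simp add: order.trans[OF _ lower[of m]])
  qed
  have "(\<lambda>m. y powr (1 / real m) * x) \<longlonglongrightarrow> y powr 0 * x" if "0 < y" for y
    by (intro tendsto_intros lim_1_over_n) (use that in auto)
  then show "(\<lambda>m. c powr (1 / real m) * x) \<longlonglongrightarrow> x" "(\<lambda>m. 1 powr (1 / real m) * x) \<longlonglongrightarrow> x"
    using c by auto
qed

lemma renewal_split_const: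
  fixes \<alpha> \<beta> :: "nat \<Rightarrow> real"
  assumes rec: "\<And>m. 1 \<le> m \<Longrightarrow> \<alpha> m = (\<Sum>l=1..m. \<beta> l * \<alpha> (m - l))"
    and const: "\<And>m. N \<le> m \<Longrightarrow> \<alpha> m = c" and L: "1 \<le> L"
  shows "c = c * (\<Sum>l=1..L. \<beta> l) + (\<Sum>l=L+1..L+N. \<beta> l * \<alpha> (L + N - l))"
proof -
  have "c = (\<Sum>l=1..L+N. \<beta> l * \<alpha> (L + N - l))" using rec[of "L + N"] const[of "L + N"] L by simp
  also have "\<dots> = (\<Sum>l=1..L. \<beta> l * \<alpha> (L + N - l)) + (\<Sum>l=L+1..L+N. \<beta> l * \<alpha> (L + N - l))"
    by (rule sum.ub_add_nat) (use L in simp)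
  also have "(\<Sum>l=1..L. \<beta> l * \<alpha> (L + N - l)) = c * (\<Sum>l=1..L. \<beta> l)"
    unfolding sum_distrib_left by (intro sum.cong refl) (auto simp: const)
  finally show ?thesis .
qed

lemma renewal_sums_one:
  fixes \<alpha> \<beta> :: "nat \<Rightarrow> real"
  assumes rec: "\<And>m. 1 \<le> m \<Longrightarrow> \<alpha> m = (\<Sum>l=1..m. \<beta> l * \<alpha> (m - l))"
    and \<beta>: "\<And>l. 0 \<le> \<beta> l" "\<beta> 0 = 0" and \<alpha>: "\<And>m. 0 \<le> \<alpha> m" "\<And>m. \<alpha> m \<le> M"
    and const: "\<And>m. N \<le> m \<Longrightarrow> \<alpha> m = c" and c: "0 < c"
  shows "\<beta> sums 1"
proof -
  define P where "P L = (\<Sum>l=1..L. \<beta> l)" for L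
  have split: "c = c * P L + (\<Sum>l=L+1..L+N. \<beta> l * \<alpha> (L + N - l))" if "1 \<le> L" for L
    unfolding P_def by (rule renewal_split_const[where \<alpha> = \<alpha>, OF rec const that])
  have P_Suc: "P L = (\<Sum>l<Suc L. \<beta> l)" for L unfolding P_def using \<beta>(2) by (rule sum_atLeast1_eq_lessThan_Suc)
  have P_le: "P L \<le> 1" for L
  proof (cases "L = 0")
    case False
    have "0 \<le> (\<Sum>l=L+1..L+N. \<beta> l * \<alpha> (L + N - l))" by (intro sum_nonneg) (simp add: \<alpha> \<beta>)
    then have "c * P L \<le> c * 1" using split[of L] False by linarith
    then show ?thesis using c by (rule mult_left_le_imp_le)
  qed (simp add: P_def)
  have summable: "summable \<beta>"
  proof (rule summableI_nonneg_bounded[OF \<beta>(1)])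
    fix n show "(\<Sum>l<n. \<beta> l) \<le> 1" using P_Suc P_le by (cases n) auto
  qed
  define S where "S = suminf \<beta>"
  have limP: "P \<longlonglongrightarrow> S"
    using LIMSEQ_Suc[OF summable_LIMSEQ[OF summable]] unfolding P_Suc[symmetric] S_def .
  have bound: "c \<le> c * P L + M * (S - P L)" if "1 \<le> L" for L
  proof -
    have "(\<Sum>l=L+1..L+N. \<beta> l * \<alpha> (L + N - l)) \<le> M * (\<Sum>l=L+1..L+N. \<beta> l)"
      unfolding sum_distrib_left by (intro sum_mono) (metis \<alpha>(2) \<beta>(1) mult.commute mult_left_mono)
    also have "\<dots> = M * (P (L + N) - P L)" unfolding P_def using sum.ub_add_nat[of 1 L \<beta> N] by simp
    also have "\<dots> \<le> M * (S - P L)"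
      using \<alpha>[of 0] sum_le_suminf[OF summable, of "{..<Suc (L + N)}"] \<beta>(1)
      unfolding P_Suc S_def by (intro mult_left_mono) auto
    finally show ?thesis using split[OF that] by simp
  qed
  have "(\<lambda>L. c * P L + M * (S - P L)) \<longlonglongrightarrow> c * S + M * (S - S)"
    by (intro tendsto_intros limP)
  then have "c \<le> c * S + M * (S - S)" by (rule LIMSEQ_le_const) (use bound in auto)
  then have "c * 1 \<le> c * S" by simp
  then have "1 \<le> S" using c by (rule mult_left_le_imp_le)
  moreover have "S \<le> 1" using limP P_le by (intro LIMSEQ_le_const2) auto
  ultimately show ?thesis using summable unfolding S_def by (simp add: summable_sums_iff)
qed

lemma summable_poly_times_geometric:
  fixes \<rho> :: real
  assumes "0 \<le> \<rho>" "\<rho> < 1"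
  shows "summable (\<lambda>l. real (l + 1) ^ M * \<rho> ^ l)"
proof (cases "\<rho> = 0")
  case True
  have "summable (\<lambda>l. if l = 0 then (1::real) else 0)" by (rule summable_single)
  moreover have "(\<lambda>l. real (l + 1) ^ M * \<rho> ^ l) = (\<lambda>l. if l = 0 then (1::real) else 0)"
    using True by (auto simp: fun_eq_iff)
  ultimately show ?thesis by simp
next
  case False
  then have rp: "0 < \<rho>" using assms by simp
  define c where "c = (1 + \<rho>) / 2"
  have c1: "c < 1" "\<rho> < c" using assms unfolding c_def by auto
  define \<theta> where "\<theta> = c / \<rho>"
  have th: "1 < \<theta>" unfolding \<theta>_def using c1 rp by simp
  have lim: "(\<lambda>l. (1 + 1 / real (Suc l)) ^ M) \<longlonglongrightarrow> (1 + 0) ^ M"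
    by (intro tendsto_intros LIMSEQ_Suc[OF lim_1_over_n])
  then have "\<forall>\<^sub>F l in sequentially. (1 + 1 / real (Suc l)) ^ M < \<theta>"
    using th by (intro order_tendstoD(2)) auto
  then obtain N where N: "\<And>l. N \<le> l \<Longrightarrow> (1 + 1 / real (Suc l)) ^ M < \<theta>"
    unfolding eventually_sequentially by blast
  show ?thesis
  proof (rule summable_ratio_test[OF c1(1)])
    fix l assume l: "N \<le> l"
    have eq: "real (Suc l + 1) = real (l + 1) * (1 + 1 / real (Suc l))"
      by (simp add: field_simps)
    have "norm (real (Suc l + 1) ^ M * \<rho> ^ Suc l) = (real (l + 1) ^ M * \<rho> ^ l) * ((1 + 1 / real (Suc l)) ^ M * \<rho>)"
      using rp unfolding eq by (simp add: power_mult_distrib)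
    also have "\<dots> \<le> (real (l + 1) ^ M * \<rho> ^ l) * (\<theta> * \<rho>)"
      using N[OF l] rp by (intro mult_left_mono mult_right_mono) auto
    also have "\<theta> * \<rho> = c" unfolding \<theta>_def using rp by simp
    finally show "norm (real (Suc l + 1) ^ M * \<rho> ^ Suc l) \<le> c * norm (real (l + 1) ^ M * \<rho> ^ l)"
      using rp by (simp add: mult.commute)
  qed
qed

lemma suminf_less_suminf:
  fixes f g :: "nat \<Rightarrow> real"
  assumes "summable f" "summable g" "\<And>n. f n \<le> g n" "f i < g i"
  shows "suminf f < suminf g"
proof -
  have "0 < (\<Sum>n. g n - f n)"
    using assms by (intro suminf_pos2[of _ i]) (auto intro: summable_diff)
  then show ?thesis using suminf_diff[OF assms(2,1)] by simp
qed

lemma isCont_suminf_inverse_powers: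
  fixes b :: "nat \<Rightarrow> real"
  assumes summable: "\<And>y. R < y \<Longrightarrow> summable (\<lambda>l. b l / y ^ l)" and R: "0 \<le> R" "R < y"
  shows "isCont (\<lambda>y. \<Sum>l. b l / y ^ l) y"
proof -
  define y' where "y' = (R + y) / 2"
  have y': "R < y'" "y' < y" using R unfolding y'_def by auto
  have "summable (\<lambda>l. b l * (1 / y') ^ l)" using summable[OF y'(1)] by (simp add: power_one_over)
  moreover have "norm (1 / y) < norm (1 / y')" using y' R by (simp add: frac_less2)
  ultimately have "isCont (\<lambda>z. \<Sum>l. b l * z ^ l) (1 / y)" by (rule isCont_powser)
  moreover have "isCont (\<lambda>y::real. 1 / y) y" using R by (intro continuous_intros) auto
  ultimately have "isCont (\<lambda>y. \<Sum>l. b l * (1 / y) ^ l) y" using isCont_o2 by blast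
  then show ?thesis by (simp add: power_one_over)
qed

lemma partial_sum_gt_one_below_root:
  fixes b :: "nat \<Rightarrow> real"
  assumes b: "\<And>l. 0 \<le> b l" "b 0 = 0" and sums: "(\<lambda>l. b l / x ^ l) sums 1" and y: "0 < y" "y < x"
  obtains L where "1 < (\<Sum>l<L. b l / y ^ l)"
proof -
  have "(x / y) * (b l / x ^ l) \<le> b l / y ^ l" for l
  proof (cases "l = 0")
    case False
    have "x / y \<le> (x / y) ^ l" using y False by (intro power_increasing[of 1 l, simplified]) auto
    then have "(x / y) * (b l / x ^ l) \<le> (x / y) ^ l * (b l / x ^ l)"
      using b y by (intro mult_right_mono) auto
    then show ?thesis using y by (simp add: power_divide)
  qed (use b in simp)
  then have le: "(x / y) * (\<Sum>l<L. b l / x ^ l) \<le> (\<Sum>l<L. b l / y ^ l)" for L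
    unfolding sum_distrib_left by (intro sum_mono)
  have "(\<lambda>L. (x / y) * (\<Sum>l<L. b l / x ^ l)) \<longlonglongrightarrow> (x / y) * 1"
    using sums unfolding sums_def by (intro tendsto_intros)
  moreover have "1 < (x / y) * 1" using y by simp
  ultimately have "\<forall>\<^sub>F L in sequentially. 1 < (x / y) * (\<Sum>l<L. b l / x ^ l)"
    by (rule order_tendstoD(1))
  then obtain L where "1 < (x / y) * (\<Sum>l<L. b l / x ^ l)"
    by (meson eventually_sequentially order_refl)
  then show thesis using le[of L] by (intro that[of L]) simp
qed

section \<open>Characteristic roots\<close>

definition char_root :: "nat \<Rightarrow> nat \<Rightarrow> (nat \<Rightarrow> nat) \<Rightarrow> real \<Rightarrow> bool" where
  "char_root q j K x \<longleftrightarrow> (\<lambda>l. real (card (adm_blocks q j K l)) / x ^ l) sums 1"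

lemma card_adm_seqs_rec_real:
  "1 \<le> m \<Longrightarrow> real (card (adm_seqs q j K m))
     = (\<Sum>l=1..m. real (card (adm_blocks q j K l)) * real (card (adm_seqs q j K (m - l))))"
  using card_adm_seqs_rec[of m q j K] by (simp add: of_nat_sum)

lemma summable_block_series:
  assumes "j \<le> q" "1 \<le> q" "real q < y"
  shows "summable (\<lambda>l. real (card (adm_blocks q j K l)) / y ^ l)"
proof (rule summable_comparison_test'[OF summable_poly_times_geometric[of "real q / y" "K q"]])
  have y: "0 < y" using assms by simp
  then show "0 \<le> real q / y" "real q / y < 1" using assms by auto
  fix l :: nat
  have "real (card (adm_blocks q j K l)) \<le> real ((l + 1) ^ K q * q ^ l)"
    using card_adm_blocks_le[OF assms(1,2), of K l] by (simp only: of_nat_le_iff)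
  then have "real (card (adm_blocks q j K l)) \<le> real (l + 1) ^ K q * real q ^ l" by simp
  then show "norm (real (card (adm_blocks q j K l)) / y ^ l) \<le> real (l + 1) ^ K q * (real q / y) ^ l"
    using y by (simp add: power_divide divide_right_mono)
qed

lemma growth_constant_of_char_root:
  assumes q: "1 \<le> q" and root: "char_root q 1 K x" and xq: "real q < x"
  shows "x \<in> growth_constants"
proof -
  define a where "a m = real (card (adm_seqs q 1 K m))" for m
  define b where "b l = real (card (adm_blocks q 1 K l))" for l
  define L where "L = q * K 1 + 1"
  have x: "0 < x" using q xq by simp
  have supp: "b l = 0" if "L < l" for l
  proof -
    have "adm_blocks q 1 K l = {}" using length_adm_block_le[OF _ q] that unfolding L_def by fastforce
    then show ?thesis unfolding b_def by simp
  qed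
  have b0: "b 0 = 0" unfolding b_def adm_blocks_0 by simp
  have root': "(\<lambda>l. b l / x ^ l) sums 1" using root unfolding char_root_def b_def .
  have rec: "a m = (\<Sum>l=1..m. b l * a (m - l))" if "1 \<le> m" for m
    using card_adm_seqs_rec_real[OF that] unfolding a_def b_def .
  have b_nonneg: "0 \<le> b l" for l unfolding b_def by simp
  have a_pos: "0 < a m" for m unfolding a_def using card_adm_seqs_pos[of 1] by simp
  have upper: "a m \<le> x ^ m" for m
    by (rule renewal_le_pow[OF _ rec b_nonneg x root']) (simp add: a_def adm_seqs_0)
  obtain c where "0 < c" "\<And>m. c * x ^ m \<le> a m"
    using renewal_ge_pow[OF rec b_nonneg supp a_pos x b0 root'] by blast
  then have "(\<lambda>m. a m powr (1 / real m)) \<longlonglongrightarrow> x"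
    using x upper by (intro root_tendsto_of_pow_bounds)
  then have "(\<lambda>m. real (card (level (seq_property q 1 K) m)) powr (1 / real m)) \<longlonglongrightarrow> x"
    unfolding card_level_seq_property a_def .
  then show ?thesis using hereditary_seq_property unfolding growth_constants_def by blast
qed

lemma char_root_top: "char_root q (Suc q) K (real (Suc q))"
proof -
  define n where "n = real (Suc q)"
  define \<alpha> where "\<alpha> m = real (card (adm_seqs q (Suc q) K m)) / n ^ m" for m
  define \<beta> where "\<beta> l = real (card (adm_blocks q (Suc q) K l)) / n ^ l" for l
  have n: "1 \<le> n" unfolding n_def by simp
  have step: "\<alpha> (Suc m) = \<alpha> m * (real (min m q + 1) / n)" for m
    unfolding \<alpha>_def card_adm_seqs_Suc_top using n by (simp add: field_simps)
  have factor_le: "real (min m q + 1) / n \<le> 1" for m unfolding n_def by simp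
  have \<alpha>_pos: "0 < \<alpha> m" for m unfolding \<alpha>_def using card_adm_seqs_pos[of "Suc q"] n by simp
  have \<alpha>_le: "\<alpha> m \<le> 1" for m
  proof (induction m)
    case (Suc m)
    show ?case unfolding step by (rule mult_le_one[OF Suc _ factor_le]) (use n in simp)
  qed (simp add: \<alpha>_def adm_seqs_0)
  have \<alpha>_const: "\<alpha> m = \<alpha> q" if "q \<le> m" for m
    using that by (induction m rule: dec_induct) (simp_all add: step n_def)
  have rec: "\<alpha> m = (\<Sum>l=1..m. \<beta> l * \<alpha> (m - l))" if "1 \<le> m" for m
    unfolding \<alpha>_def \<beta>_def card_adm_seqs_rec_real[OF that] sum_divide_distrib
    using n by (intro sum.cong refl) (auto simp: power_diff)
  have "\<beta> sums 1"
    by (rule renewal_sums_one[OF rec _ _ _ \<alpha>_le \<alpha>_const \<alpha>_pos])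
      (use n in \<open>simp_all add: \<beta>_def adm_blocks_0 less_imp_le[OF \<alpha>_pos]\<close>)
  then show ?thesis unfolding char_root_def \<beta>_def n_def .
qed

lemma block_series_update_less_one:
  assumes j: "1 \<le> j" "j \<le> q" and root: "char_root q (Suc j) K x" and x: "real q < x"
  shows "(\<Sum>l. real (card (adm_blocks q j (K(j := k)) l)) / x ^ l) < 1"
proof -
  define L where "L = k + j + 1"
  have "staircase j L \<in> adm_blocks q (Suc j) K L - adm_blocks q j (K(j := k)) L"
    using staircase_in_adm_blocks[OF j] staircase_notin_adm_blocks[of k L j] unfolding L_def by simp
  then have "card (adm_blocks q j (K(j := k)) L) < card (adm_blocks q (Suc j) K L)"
    by (intro psubset_card_mono finite_adm_blocks) (use adm_blocks_update_subset in blast)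
  moreover have "card (adm_blocks q j (K(j := k)) l) \<le> card (adm_blocks q (Suc j) K l)" for l
    by (intro card_mono finite_adm_blocks adm_blocks_update_subset)
  moreover have "summable (\<lambda>l. real (card (adm_blocks q j (K(j := k)) l)) / x ^ l)"
    by (rule summable_block_series) (use j x in auto)
  moreover have "summable (\<lambda>l. real (card (adm_blocks q (Suc j) K l)) / x ^ l)"
    using root sums_summable unfolding char_root_def by blast
  moreover have "0 < x" using j x by simp
  ultimately have "(\<Sum>l. real (card (adm_blocks q j (K(j := k)) l)) / x ^ l)
      < (\<Sum>l. real (card (adm_blocks q (Suc j) K l)) / x ^ l)"
    by (intro suminf_less_suminf[of _ _ L] divide_right_mono divide_strict_right_mono) auto
  also have "\<dots> = 1" using root unfolding char_root_def by (rule sums_unique[symmetric])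
  finally show ?thesis .
qed

lemma block_series_update_gt_one:
  assumes j: "j \<le> q" "1 \<le> q" and root: "char_root q (Suc j) K x" and y: "real q < y" "y < x"
  obtains k where "1 < (\<Sum>l. real (card (adm_blocks q j (K(j := k)) l)) / y ^ l)"
proof -
  have y0: "0 < y" using j y by simp
  have b0: "real (card (adm_blocks q (Suc j) K 0)) = 0" by (simp add: adm_blocks_0)
  obtain L where L: "1 < (\<Sum>l<L. real (card (adm_blocks q (Suc j) K l)) / y ^ l)"
    using partial_sum_gt_one_below_root[OF of_nat_0_le_iff b0 root[unfolded char_root_def] y0 y(2)] .
  also have "\<dots> = (\<Sum>l<L. real (card (adm_blocks q j (K(j := L)) l)) / y ^ l)"
    by (intro sum.cong refl) (simp add: adm_blocks_update_eq)
  also have "\<dots> \<le> (\<Sum>l. real (card (adm_blocks q j (K(j := L)) l)) / y ^ l)"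
    using summable_block_series[OF _ j(2) y(1)] j y0 by (intro sum_le_suminf) auto
  finally show thesis by (rule that)
qed

lemma char_root_approx_below:
  assumes j: "1 \<le> j" "j \<le> q" and root: "char_root q (Suc j) K x" and x: "real q < x"
    and e: "0 < \<epsilon>"
  obtains k y where "char_root q j (K(j := k)) y" "real q < y" "x - \<epsilon> < y" "y < x"
proof -
  define y0 where "y0 = (max (x - \<epsilon>) (real q) + x) / 2"
  have y0: "max (x - \<epsilon>) (real q) < y0" "y0 < x" unfolding y0_def using e x by auto
  obtain k where k: "1 < (\<Sum>l. real (card (adm_blocks q j (K(j := k)) l)) / y0 ^ l)"
    using block_series_update_gt_one[OF j(2) _ root] j y0 by auto
  define h where "h y = (\<Sum>l. real (card (adm_blocks q j (K(j := k)) l)) / y ^ l)" for y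
  have summable: "summable (\<lambda>l. real (card (adm_blocks q j (K(j := k)) l)) / y ^ l)" if "real q < y" for y
    by (rule summable_block_series) (use j that in auto)
  have "continuous_on {y0..x} h"
    using y0 unfolding h_def
    by (intro continuous_at_imp_continuous_on ballI isCont_suminf_inverse_powers[OF summable]) auto
  moreover have "h x < 1" unfolding h_def by (rule block_series_update_less_one[OF j root x])
  ultimately obtain y where y: "y0 \<le> y" "y \<le> x" "h y = 1"
    using IVT2'[of h x 1 y0] k y0 unfolding h_def by fastforce
  have "char_root q j (K(j := k)) y"
    unfolding char_root_def using summable[of y] y y0 unfolding h_def by (simp add: summable_sums_iff)
  moreover have "y \<noteq> x" using y \<open>h x < 1\<close> by auto
  ultimately show thesis using y y0 by (intro that) auto
qed

lemma acc_belowI: "(\<And>\<epsilon>. 0 < \<epsilon> \<Longrightarrow> S \<inter> {c - \<epsilon><..<c} \<noteq> {}) \<Longrightarrow> c \<in> acc_below S"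
  unfolding acc_below_def by blast

lemma char_root_in_acc_below:
  assumes "1 \<le> q" "i \<le> q" "char_root q (Suc i) K x" "real q < x"
  shows "x \<in> (acc_below ^^ i) growth_constants"
  using assms
proof (induction i arbitrary: K x)
  case 0
  then show ?case using growth_constant_of_char_root[of q K x] by simp
next
  case (Suc i)
  have "x \<in> acc_below ((acc_below ^^ i) growth_constants)"
  proof (rule acc_belowI)
    fix \<epsilon> :: real assume "0 < \<epsilon>"
    then obtain k y where y: "char_root q (Suc i) (K(Suc i := k)) y" "real q < y" "x - \<epsilon> < y" "y < x"
      using char_root_approx_below[of "Suc i" q K x] Suc.prems by auto
    moreover have "i \<le> q" using Suc.prems by simp
    ultimately have "y \<in> (acc_below ^^ i) growth_constants" using Suc.IH[OF Suc.prems(1)] by blast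
    then show "(acc_below ^^ i) growth_constants \<inter> {x - \<epsilon><..<x} \<noteq> {}" using y by auto
  qed
  then show ?case by simp
qed

theorem corollary32:
  fixes n :: nat
  assumes "n \<ge> 2"
  shows "real n \<in> (acc_below ^^ (n - 1)) growth_constants"
proof -
  have "char_root (n - 1) (Suc (n - 1)) (\<lambda>_. 0) (real (Suc (n - 1)))" by (rule char_root_top)
  then have "real (Suc (n - 1)) \<in> (acc_below ^^ (n - 1)) growth_constants"
    using assms by (intro char_root_in_acc_below) auto
  then show ?thesis using assms by simp
qed

end
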